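(* Let $M$ be a Peano continuum. Every cut pair of $M$ is contained in a unique cyclic element of $M$.
   Context: A Peano continuum is a compact, connected, locally connected metrizable space. A (global) cut point of $M$ is $\eta\in M$ with $M\setminus\{\eta\}$ disconnected. A cyclic element is a subset $C\subseteq M$ that either consists of a single cut point, or contains a non-cut point $p$ together with all points $q$ not separated from $p$ by any cut point of $M$. A cut pair is a set of two distinct points $\{\zeta,\xi\}$ such that $M\setminus\{\zeta,\xi\}$ is disconnected but neither $\zeta$ nor $\xi$ is a cut point of $M$. *)

theory Defs
  imports "HOL-Analysis.Analysis"
begin

definition peano_continuum :: "'a topology \<Rightarrow> bool" where
  "peano_continuum X \<longleftrightarrow> compact_space X \<and> connected_space X \<and>
     locally_connected_space X \<and> metrizable_space X"

definition cut_point :: "'a topology \<Rightarrow> 'a \<Rightarrow> bool" where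
  "cut_point X e \<longleftrightarrow> e \<in> topspace X \<and> \<not> connectedin X (topspace X - {e})"

definition separates :: "'a topology \<Rightarrow> 'a \<Rightarrow> 'a \<Rightarrow> 'a \<Rightarrow> bool" where
  "separates X e p q \<longleftrightarrow> p \<in> topspace X - {e} \<and> q \<in> topspace X - {e} \<and>
     (\<exists>U V. openin (subtopology X (topspace X - {e})) U \<and>
            openin (subtopology X (topspace X - {e})) V \<and>
            U \<inter> V = {} \<and> U \<union> V = topspace X - {e} \<and> p \<in> U \<and> q \<in> V)"

definition cyclic_element :: "'a topology \<Rightarrow> 'a set \<Rightarrow> bool" where
  "cyclic_element X C \<longleftrightarrow>
     (\<exists>e. cut_point X e \<and> C = {e}) \<or>
     (\<exists>p \<in> topspace X. \<not> cut_point X p \<and>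
        C = {q \<in> topspace X. \<forall>e. cut_point X e \<longrightarrow> \<not> separates X e p q})"

definition cut_pair :: "'a topology \<Rightarrow> 'a \<Rightarrow> 'a \<Rightarrow> bool" where
  "cut_pair X z x \<longleftrightarrow> z \<in> topspace X \<and> x \<in> topspace X \<and> z \<noteq> x \<and>
     \<not> connectedin X (topspace X - {z, x}) \<and> \<not> cut_point X z \<and> \<not> cut_point X x"

end

theory Submission
  imports Defs
begin

(* No point e separates a cut pair {z, x}. Take a separation U, V of M - {e} with z in U and
   x in V, and a nonempty piece B of M - {z, x}, open and relatively closed there, that misses e.
   Then B \<inter> U is relatively clopen in the connected set M - {z} and misses x, so it is empty;
   symmetrically B \<inter> V is empty, hence B is empty. So x lies in the cyclic element of the non-cut
   point z, and since non-separation by a cut point is an equivalence relation on non-cut points,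
   every cyclic element containing z is this one. *)

lemma connectedin_relatively_clopen_eq_empty:
  assumes "connectedin X S" "openin X W" "W \<subseteq> S" "S \<inter> X closure_of W \<subseteq> W" "a \<in> S - W"
  shows "W = {}"
proof -
  have "S \<inter> X frontier_of W = {}"
    using assms(2,4) by (auto simp: frontier_of_def interior_of_openin)
  then show ?thesis
    using connectedin_Int_frontier_of[OF assms(1)] assms(3,5) by blast
qed

lemma not_connectedin_open_obtain_relatively_clopen:
  assumes "openin X S" "\<not> connectedin X S"
  obtains B where "openin X B" "B \<noteq> {}" "B \<subseteq> S" "S \<inter> X closure_of B \<subseteq> B" "e \<notin> B"
proof -
  obtain E1 E2 where E: "openin X E1" "openin X E2" "S \<subseteq> E1 \<union> E2" "E1 \<inter> E2 \<inter> S = {}"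
    "E1 \<inter> S \<noteq> {}" "E2 \<inter> S \<noteq> {}"
    using assms connectedin openin_subset by metis
  have relatively_closed: "S \<inter> X closure_of (E \<inter> S) \<subseteq> E \<inter> S"
    if "openin X E'" "S \<subseteq> E \<union> E'" "E \<inter> E' \<inter> S = {}" for E E'
  proof -
    have "E' \<inter> X closure_of (E \<inter> S) = {}"
      using that openin_Int_closure_of_eq_empty by blast
    then show ?thesis using that by blast
  qed
  have "\<exists>B. openin X B \<and> B \<noteq> {} \<and> B \<subseteq> S \<and> S \<inter> X closure_of B \<subseteq> B \<and> e \<notin> B"
  proof (cases "e \<in> E1")
    case True
    with E show ?thesis
      by (intro exI[of _ "E2 \<inter> S"]) (use relatively_closed[where E=E2 and E'=E1] assms(1) in auto)
  next
    case False
    with E show ?thesis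
      by (intro exI[of _ "E1 \<inter> S"]) (use relatively_closed[where E=E1 and E'=E2] assms(1) in auto)
  qed
  then show ?thesis
    using that by blast
qed

lemma cut_pair_not_separated:
  assumes "t1_space X" and pair: "cut_pair X z x"
  shows "\<not> separates X e z x"
proof
  let ?T = "topspace X"
  let ?S = "?T - {z, x}"
  assume "separates X e z x"
  then obtain U V where U: "openin (subtopology X (?T - {e})) U"
    and V: "openin (subtopology X (?T - {e})) V"
    and UV: "U \<inter> V = {}" "U \<union> V = ?T - {e}" "z \<in> U" "x \<in> V"
    unfolding separates_def by blast
  have delete: "openin X (W - {w})" if "openin X W" for W w
    using assms(1) that by (simp add: t1_space_openin_delete_alt)
  have "openin X (?T - {e})"
    by (simp add: delete)
  then have "openin X U" "openin X V"
    using U V openin_open_subtopology by blast+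
  have "openin X ?S"
    using delete[OF delete[OF openin_topspace], of z x] by (metis Diff_insert2)
  moreover have "\<not> connectedin X ?S"
    using pair unfolding cut_pair_def by blast
  ultimately obtain B where B: "openin X B" "B \<noteq> {}" "B \<subseteq> ?S" "?S \<inter> X closure_of B \<subseteq> B" "e \<notin> B"
    by (rule not_connectedin_open_obtain_relatively_clopen)
  have side: "B \<inter> U' = {}"
    if "connectedin X (?T - {a})" "openin X U'" "openin X V'" "U' \<inter> V' = {}"
      "U' \<union> V' = ?T - {e}" "b \<in> V'" "a \<noteq> b"
      "B \<subseteq> ?T - {a, b}" "(?T - {a, b}) \<inter> X closure_of B \<subseteq> B" for a b U' V'
  proof (rule connectedin_relatively_clopen_eq_empty[OF that(1)])
    show "openin X (B \<inter> U')"
      using B(1) that(2) by (rule openin_Int)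
    show "B \<inter> U' \<subseteq> ?T - {a}" "b \<in> ?T - {a} - B \<inter> U'"
      using that(4-8) by blast+
    have "X closure_of U' \<inter> V' = {}"
      using that(3,4) openin_Int_closure_of_eq_empty by blast
    then have "X closure_of (B \<inter> U') \<subseteq> X closure_of B - V'"
      using closure_of_mono[of "B \<inter> U'" B X] closure_of_mono[of "B \<inter> U'" U' X] by blast
    then show "(?T - {a}) \<inter> X closure_of (B \<inter> U') \<subseteq> B \<inter> U'"
      using B(5) that(5,6,9) closure_of_subset_topspace by blast
  qed
  have "connectedin X (?T - {z})" "connectedin X (?T - {x})" "z \<noteq> x"
    using pair unfolding cut_pair_def cut_point_def by auto
  then have "B \<inter> U = {}" "B \<inter> V = {}"
    using side[of z U V x] side[of x V U z] B(3,4) UV \<open>openin X U\<close> \<open>openin X V\<close>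
    by (simp_all add: insert_commute Int_commute Un_commute)
  with B UV show False
    by blast
qed

definition cyclic_class :: "'a topology \<Rightarrow> 'a \<Rightarrow> 'a set" where
  "cyclic_class X p = {q \<in> topspace X. \<forall>e. cut_point X e \<longrightarrow> \<not> separates X e p q}"

lemma separates_sym: "separates X e p q \<Longrightarrow> separates X e q p"
  unfolding separates_def by blast

lemma not_separates_refl: "\<not> separates X e p p"
  unfolding separates_def by blast

lemma separates_cases:
  assumes "separates X e p r" "q \<in> topspace X" "q \<noteq> e"
  shows "separates X e p q \<or> separates X e q r"
  using assms unfolding separates_def by blast

lemma cyclic_class_eq:
  assumes q: "q \<in> cyclic_class X p" and "p \<in> topspace X" "\<not> cut_point X p" "\<not> cut_point X q"
  shows "cyclic_class X q = cyclic_class X p"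
proof -
  have "separates X e q r \<longleftrightarrow> separates X e p r" if e: "cut_point X e" and r: "r \<in> topspace X" for e r
  proof -
    have "p \<in> topspace X" "q \<in> topspace X" "p \<noteq> e" "q \<noteq> e" "\<not> separates X e p q"
      using q e assms unfolding cyclic_class_def by auto
    then show ?thesis
      by (metis separates_cases separates_sym)
  qed
  then show ?thesis
    unfolding cyclic_class_def by blast
qed

lemma cyclic_element_cyclic_class:
  "p \<in> topspace X \<Longrightarrow> \<not> cut_point X p \<Longrightarrow> cyclic_element X (cyclic_class X p)"
  unfolding cyclic_element_def cyclic_class_def by blast

lemma cyclic_element_eq_cyclic_class:
  assumes "cyclic_element X C" "p \<in> C" "\<not> cut_point X p"
  shows "C = cyclic_class X p"
proof -
  obtain q where "q \<in> topspace X" "\<not> cut_point X q" "C = cyclic_class X q"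
    using assms unfolding cyclic_element_def cyclic_class_def by blast
  then show ?thesis
    using assms cyclic_class_eq by metis
qed

theorem lemma2p5:
  fixes X :: "'a topology" and z x :: 'a
  assumes "peano_continuum X"
    and "cut_pair X z x"
  shows "\<exists>!C. cyclic_element X C \<and> {z, x} \<subseteq> C"
proof -
  have t1: "t1_space X"
    using assms(1) metrizable_imp_t1_space unfolding peano_continuum_def by blast
  have z: "z \<in> topspace X" "\<not> cut_point X z" and "x \<in> topspace X"
    using assms(2) unfolding cut_pair_def by auto
  then have "{z, x} \<subseteq> cyclic_class X z"
    using cut_pair_not_separated[OF t1 assms(2)]
    unfolding cyclic_class_def by (auto simp: not_separates_refl)
  with cyclic_element_cyclic_class[OF z] show ?thesis
    by (metis cyclic_element_eq_cyclic_class insert_subset z(2))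
qed

end
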